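(* Let $\varepsilon>0$, $q\ge0$ an integer, and $s\in\{s^+,s^-\}$. With the notation of the context, define for $n\in\{4q,\dots,4q+3\}$ and $j\in\{1,\dots,4\}$: $r^j_n=X^j_\varepsilon(n\varepsilon)$, $p^j_n=m\,\frac{r^j_{n+1}-r^j_n}{\varepsilon}$, $\widetilde r_n=\widetilde X_\varepsilon(n\varepsilon)$, $\widetilde p_n=m\,\frac{\widetilde r_{n+1}-\widetilde r_n}{\varepsilon}$, and the average angular momentum $$\sigma=\frac1{16}\sum_{n=4q}^{4q+3}\sum_{j=1}^4 r^j_n\wedge p^j_n .$$ Then $$\sigma=\frac14\sum_{n=4q}^{4q+3}\widetilde r_n\wedge\widetilde p_n+s_z,\qquad\text{where } s_z=-\frac{\hbar}{2}\ \text{if } s=s^+,\quad s_z=+\frac{\hbar}{2}\ \text{if } s=s^- .$$ That is, the extended particle has intrinsic angular momentum $\mp\hbar/2$, independently of $\varepsilon$.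
   Context: Fix constants $\hbar>0$, $m>0$. In $\mathbb{R}^2$ let $u^1=(1,1)$, $u^2=(1,-1)$, $u^3=(-1,-1)$, $u^4=(-1,1)$. Let $s^+$ be the cyclic permutation $u^1\mapsto u^2\mapsto u^3\mapsto u^4\mapsto u^1$ and $s^-=(s^+)^{-1}$; $s^k$ denotes the $k$-th iterate. For $\varepsilon>0$ put $\gamma=(1+i)\sqrt{\hbar\varepsilon/(4m)}$. Given a continuous $\mathcal{V}:[0,\infty)\to\mathbb{C}^2$ and $Z_0\in\mathbb{C}^2$, define $Z^j_\varepsilon(0)=Z_0$ and for $n\ge1$, $n=4q+r$ ($0\le r\le3$): $Z^j_\varepsilon(n\varepsilon)=Z^j_\varepsilon((n-1)\varepsilon)+\mathcal{V}(4q\varepsilon)\varepsilon+\gamma(s^nu^j-s^{n-1}u^j)$, $j=1,\dots,4$. Define also $\widetilde Z_\varepsilon(0)=Z_0$, $\widetilde Z_\varepsilon(n\varepsilon)=\widetilde Z_\varepsilon((n-1)\varepsilon)+\mathcal{V}(4q\varepsilon)\varepsilon$ (the "center of gravity" process). Set $X^j_\varepsilon=\operatorname{Re}Z^j_\varepsilon$ and $\widetilde X_\varepsilon=\operatorname{Re}\widetilde Z_\varepsilon$ (componentwise real parts, in $\mathbb{R}^2$). For $a=(a_x,a_y),b=(b_x,b_y)\in\mathbb{R}^2$, $a\wedge b=a_xb_y-a_yb_x$. *)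

theory Defs
  imports "HOL-Analysis.Analysis"
begin

definition wedge :: "real \<times> real \<Rightarrow> real \<times> real \<Rightarrow> real" where
  "wedge a b = fst a * snd b - snd a * fst b"

fun u :: "nat \<Rightarrow> real \<times> real" where
  "u (Suc 0) = (1, 1)"
| "u (Suc (Suc 0)) = (1, -1)"
| "u (Suc (Suc (Suc 0))) = (-1, -1)"
| "u (Suc (Suc (Suc (Suc 0)))) = (-1, 1)"
| "u _ = (0, 0)"

definition splus :: "real \<times> real \<Rightarrow> real \<times> real" where
  "splus v = (if v = u 1 then u 2 else if v = u 2 then u 3 else
              if v = u 3 then u 4 else if v = u 4 then u 1 else v)"

definition sminus :: "real \<times> real \<Rightarrow> real \<times> real" where
  "sminus v = (if v = u 2 then u 1 else if v = u 3 then u 2 else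
               if v = u 4 then u 3 else if v = u 1 then u 4 else v)"

definition cvec :: "real \<times> real \<Rightarrow> complex \<times> complex" where
  "cvec v = (complex_of_real (fst v), complex_of_real (snd v))"

definition cscale :: "complex \<Rightarrow> complex \<times> complex \<Rightarrow> complex \<times> complex" where
  "cscale c z = (c * fst z, c * snd z)"

definition reV :: "complex \<times> complex \<Rightarrow> real \<times> real" where
  "reV z = (Re (fst z), Re (snd z))"

definition gamma :: "real \<Rightarrow> real \<Rightarrow> real \<Rightarrow> complex" where
  "gamma hbar m eps = (1 + \<i>) * complex_of_real (sqrt (hbar * eps / (4 * m)))"

text \<open>Zproc ... j n is Z^j_eps(n eps); step n (n \<ge> 1, n = 4q + r) uses V(4 q eps).\<close>
primrec Zproc :: "real \<Rightarrow> real \<Rightarrow> real \<Rightarrow> (real \<Rightarrow> complex \<times> complex) \<Rightarrow> complex \<times> complex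
    \<Rightarrow> (real \<times> real \<Rightarrow> real \<times> real) \<Rightarrow> nat \<Rightarrow> nat \<Rightarrow> complex \<times> complex" where
  "Zproc hbar m eps V Z0 s j 0 = Z0"
| "Zproc hbar m eps V Z0 s j (Suc n) =
     Zproc hbar m eps V Z0 s j n + cscale (complex_of_real eps) (V (real (4 * (Suc n div 4)) * eps))
     + cscale (gamma hbar m eps) (cvec ((s ^^ Suc n) (u j) - (s ^^ n) (u j)))"

text \<open>Ztil ... n is the center of gravity process at time n eps.\<close>
primrec Ztil :: "real \<Rightarrow> (real \<Rightarrow> complex \<times> complex) \<Rightarrow> complex \<times> complex \<Rightarrow> nat \<Rightarrow> complex \<times> complex" where
  "Ztil eps V Z0 0 = Z0"
| "Ztil eps V Z0 (Suc n) = Ztil eps V Z0 n + cscale (complex_of_real eps) (V (real (4 * (Suc n div 4)) * eps))"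

definition Xproc where
  "Xproc hbar m eps V Z0 s j n = reV (Zproc hbar m eps V Z0 s j n)"

definition Xtil where
  "Xtil eps V Z0 n = reV (Ztil eps V Z0 n)"

end

theory Submission
  imports Defs
begin

text \<open>Every particle moves like the centre of gravity plus the offset
  \<open>c ((s^n) u\<^sub>j - u\<^sub>j)\<close> with \<open>c = \<surd>(\<hbar>\<epsilon>/4m)\<close>, the real part of \<open>\<gamma>\<close>.
  Since \<open>s\<close> cyclically permutes the four corners \<open>u\<^sub>j\<close>, whose sum is zero, the offsets
  sum to zero over \<open>j\<close>, so all cross terms of the angular momentum cancel and it splits
  into the angular momentum of the centre of gravity and that of the offsets. The latter
  is \<open>c\<^sup>2 m/\<epsilon> = \<hbar>/4\<close> times a purely combinatorial sum over one period of
  the rotation, which equals \<open>\<mp>32\<close> according to its orientation.\<close>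

lemma wedge_sum_left: "wedge (\<Sum>j\<in>J. f j) b = (\<Sum>j\<in>J. wedge (f j) b)"
  and wedge_sum_right: "wedge a (\<Sum>j\<in>J. f j) = (\<Sum>j\<in>J. wedge a (f j))"
  by (simp_all add: wedge_def fst_sum snd_sum sum_distrib_left sum_distrib_right sum_subtractf)

lemma sum_wedge_balanced_displacements:
  fixes A B :: "real \<times> real" and a b :: "'j \<Rightarrow> real \<times> real"
  assumes "(\<Sum>j\<in>J. a j) = 0" and "(\<Sum>j\<in>J. b j) = 0"
  shows "(\<Sum>j\<in>J. wedge (A + c *\<^sub>R a j) (k *\<^sub>R ((B + c *\<^sub>R b j) - (A + c *\<^sub>R a j))))
       = card J * wedge A (k *\<^sub>R (B - A)) + c * c * k * (\<Sum>j\<in>J. wedge (a j) (b j - a j))"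
proof -
  have pointwise: "wedge (A + c *\<^sub>R a j) (k *\<^sub>R ((B + c *\<^sub>R b j) - (A + c *\<^sub>R a j)))
      = wedge A (k *\<^sub>R (B - A)) + c * k * wedge A (b j - a j) + c * k * wedge (a j) (B - A)
        + c * c * k * wedge (a j) (b j - a j)" for j
    by (simp add: wedge_def algebra_simps)
  have "(\<Sum>j\<in>J. wedge A (b j - a j)) = wedge A ((\<Sum>j\<in>J. b j) - (\<Sum>j\<in>J. a j))"
    by (simp add: wedge_sum_right sum_subtractf[symmetric])
  also have "\<dots> = 0"
    by (simp add: assms wedge_def)
  finally have cross_left: "(\<Sum>j\<in>J. wedge A (b j - a j)) = 0" .
  have "(\<Sum>j\<in>J. wedge (a j) (B - A)) = wedge (\<Sum>j\<in>J. a j) (B - A)"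
    by (simp add: wedge_sum_left)
  also have "\<dots> = 0"
    by (simp add: assms wedge_def)
  finally have cross_right: "(\<Sum>j\<in>J. wedge (a j) (B - A)) = 0" .
  show ?thesis
    by (simp add: pointwise sum.distrib sum_distrib_left[symmetric] cross_left cross_right)
qed

lemma reV_add: "reV (z + w) = reV z + reV w"
  by (simp add: reV_def)

lemma reV_cscale_gamma: "reV (cscale (gamma hbar m eps) (cvec v)) = sqrt (hbar * eps / (4 * m)) *\<^sub>R v"
  by (simp add: reV_def cscale_def gamma_def cvec_def prod_eq_iff)

lemma Xproc_eq_Xtil_plus_offset:
  "Xproc hbar m eps V Z0 s j n
     = Xtil eps V Z0 n + sqrt (hbar * eps / (4 * m)) *\<^sub>R ((s ^^ n) (u j) - u j)"
proof (induction n)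
  case 0
  then show ?case by (simp add: Xproc_def Xtil_def)
next
  case (Suc n)
  then show ?case by (simp add: Xproc_def Xtil_def reV_add reV_cscale_gamma algebra_simps)
qed

lemma u_numeral: "u 1 = (1, 1)" "u 2 = (1, -1)" "u 3 = (-1, -1)" "u 4 = (-1, 1)"
  by (simp_all add: numeral_eq_Suc)

lemma u_cases: "u j \<in> {(1, 1), (1, -1), (-1, -1), (-1, 1), (0, 0)}"
  by (cases j rule: u.cases) auto

lemma splus_corners:
  "splus (1, 1) = (1, -1)" "splus (1, -1) = (-1, -1)" "splus (-1, -1) = (-1, 1)"
  "splus (-1, 1) = (1, 1)" "splus (0, 0) = (0, 0)"
  by (simp_all add: splus_def u_numeral)

lemma sminus_corners:
  "sminus (1, 1) = (-1, 1)" "sminus (1, -1) = (1, 1)" "sminus (-1, -1) = (1, -1)"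
  "sminus (-1, 1) = (-1, -1)" "sminus (0, 0) = (0, 0)"
  by (simp_all add: sminus_def u_numeral)

lemma funpow_numeral_small:
  "(f ^^ 2) x = f (f x)" "(f ^^ 3) x = f (f (f x))" "(f ^^ 4) x = f (f (f (f x)))"
  by (simp_all add: numeral_eq_Suc)

lemma rotation_funpow_4:
  assumes "s \<in> {splus, sminus}"
  shows "(s ^^ 4) (u j) = u j"
  using assms u_cases[of j]
  by (auto simp: funpow_numeral_small splus_corners sminus_corners)

lemma rotation_funpow_period:
  assumes "s \<in> {splus, sminus}"
  shows "(s ^^ (4 * q + r)) (u j) = (s ^^ r) (u j)"
proof -
  have "(s ^^ (4 * q)) (u j) = u j"
    by (induction q) (simp_all add: funpow_add rotation_funpow_4[OF assms])
  then show ?thesis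
    by (simp add: funpow_add add.commute[of "4 * q"])
qed

lemma sum_rotation_offsets:
  assumes "s \<in> {splus, sminus}"
  shows "(\<Sum>j\<in>{1..4::nat}. (s ^^ n) (u j) - u j) = 0"
proof -
  have corners: "{1..4::nat} = {1, 2, 3, 4}" by auto
  have reduce: "(s ^^ n) (u j) = (s ^^ (n mod 4)) (u j)" for j
    using rotation_funpow_period[OF assms, of "n div 4" "n mod 4"] by simp
  have "n mod 4 \<in> {0, 1, 2, 3}" by auto
  then show ?thesis
    using assms unfolding reduce corners
    by (auto simp: funpow_numeral_small u_numeral splus_corners sminus_corners prod_eq_iff)
qed

lemma sum_wedge_Xproc_eq_Xtil_plus_spin:
  assumes "s \<in> {splus, sminus}" and "hbar \<ge> 0" and "m > 0" and "eps > 0"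
  shows "(\<Sum>j\<in>{1..4::nat}. wedge (Xproc hbar m eps V Z0 s j n)
            ((m / eps) *\<^sub>R (Xproc hbar m eps V Z0 s j (n + 1) - Xproc hbar m eps V Z0 s j n)))
       = 4 * wedge (Xtil eps V Z0 n) ((m / eps) *\<^sub>R (Xtil eps V Z0 (n + 1) - Xtil eps V Z0 n))
         + hbar / 4 * (\<Sum>j\<in>{1..4::nat}.
              wedge ((s ^^ n) (u j) - u j) ((s ^^ (n + 1)) (u j) - (s ^^ n) (u j)))"
proof -
  define c where "c = sqrt (hbar * eps / (4 * m))"
  define a where "a k j = (s ^^ k) (u j) - u j" for k j
  have cc: "c * c * (m / eps) = hbar / 4"
    using assms(2-4) by (simp add: c_def real_sqrt_mult_self)
  have "(\<Sum>j\<in>{1..4::nat}. wedge (Xproc hbar m eps V Z0 s j n)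
            ((m / eps) *\<^sub>R (Xproc hbar m eps V Z0 s j (n + 1) - Xproc hbar m eps V Z0 s j n)))
      = (\<Sum>j\<in>{1..4::nat}. wedge (Xtil eps V Z0 n + c *\<^sub>R a n j)
            ((m / eps) *\<^sub>R ((Xtil eps V Z0 (n + 1) + c *\<^sub>R a (n + 1) j) - (Xtil eps V Z0 n + c *\<^sub>R a n j))))"
    unfolding Xproc_eq_Xtil_plus_offset c_def a_def ..
  also have "\<dots> = card {1..4::nat} * wedge (Xtil eps V Z0 n) ((m / eps) *\<^sub>R (Xtil eps V Z0 (n + 1) - Xtil eps V Z0 n))
      + c * c * (m / eps) * (\<Sum>j\<in>{1..4::nat}. wedge (a n j) (a (n + 1) j - a n j))"
    by (rule sum_wedge_balanced_displacements) (simp_all only: a_def sum_rotation_offsets[OF assms(1)])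
  also have "\<dots> = 4 * wedge (Xtil eps V Z0 n) ((m / eps) *\<^sub>R (Xtil eps V Z0 (n + 1) - Xtil eps V Z0 n))
      + hbar / 4 * (\<Sum>j\<in>{1..4::nat}. wedge ((s ^^ n) (u j) - u j) ((s ^^ (n + 1)) (u j) - (s ^^ n) (u j)))"
    unfolding cc a_def by simp
  finally show ?thesis .
qed

lemma sum_wedge_rotation_period:
  assumes "s \<in> {splus, sminus}"
  shows "(\<Sum>n\<in>{4*q..4*q+3}. \<Sum>j\<in>{1..4::nat}.
            wedge ((s ^^ n) (u j) - u j) ((s ^^ (n + 1)) (u j) - (s ^^ n) (u j)))
       = (if s = splus then -32 else 32)"
proof -
  have block: "{4*q..4*q+3} = {0 + 4*q..3 + 4*q}" "{0..3::nat} = {0, 1, 2, 3}" "{1..4::nat} = {1, 2, 3, 4}"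
    by auto
  have "splus \<noteq> sminus"
    using splus_corners(1) sminus_corners(1) by (metis prod.inject one_neq_neg_one)
  then consider "s = splus" | "s = sminus" "s \<noteq> splus"
    using assms by blast
  then show ?thesis
    unfolding block sum.atLeastAtMost_shift_bounds comp_def
    using rotation_funpow_period[OF assms, of q]
    by cases (simp_all add: add.commute[of _ "4*q"] add.assoc funpow_numeral_small u_numeral
        splus_corners sminus_corners wedge_def)
qed

theorem theorem2:
  fixes hbar m eps :: real and q :: nat
    and V :: "real \<Rightarrow> complex \<times> complex" and Z0 :: "complex \<times> complex"
    and s :: "real \<times> real \<Rightarrow> real \<times> real"
  assumes "hbar > 0" and "m > 0" and "eps > 0"
    and "continuous_on {0..} V"
    and "s \<in> {splus, sminus}"
  shows "(1/16) * (\<Sum>n\<in>{4*q..4*q+3}. \<Sum>j\<in>{1..4::nat}.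
            wedge (Xproc hbar m eps V Z0 s j n)
                  ((m / eps) *\<^sub>R (Xproc hbar m eps V Z0 s j (n+1) - Xproc hbar m eps V Z0 s j n)))
       = (1/4) * (\<Sum>n\<in>{4*q..4*q+3}.
            wedge (Xtil eps V Z0 n) ((m / eps) *\<^sub>R (Xtil eps V Z0 (n+1) - Xtil eps V Z0 n)))
         + (if s = splus then - hbar / 2 else hbar / 2)"
proof -
  have "(\<Sum>n\<in>{4*q..4*q+3}. \<Sum>j\<in>{1..4::nat}.
            wedge (Xproc hbar m eps V Z0 s j n)
                  ((m / eps) *\<^sub>R (Xproc hbar m eps V Z0 s j (n+1) - Xproc hbar m eps V Z0 s j n)))
      = 4 * (\<Sum>n\<in>{4*q..4*q+3}.
            wedge (Xtil eps V Z0 n) ((m / eps) *\<^sub>R (Xtil eps V Z0 (n+1) - Xtil eps V Z0 n)))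
        + hbar / 4 * (\<Sum>n\<in>{4*q..4*q+3}. \<Sum>j\<in>{1..4::nat}.
            wedge ((s ^^ n) (u j) - u j) ((s ^^ (n + 1)) (u j) - (s ^^ n) (u j)))"
    using sum_wedge_Xproc_eq_Xtil_plus_spin[OF assms(5) less_imp_le[OF assms(1)] assms(2,3)]
    by (simp only: sum.distrib sum_distrib_left)
  also have "(\<Sum>n\<in>{4*q..4*q+3}. \<Sum>j\<in>{1..4::nat}.
            wedge ((s ^^ n) (u j) - u j) ((s ^^ (n + 1)) (u j) - (s ^^ n) (u j)))
      = (if s = splus then -32 else 32)"
    using assms(5) by (rule sum_wedge_rotation_period)
  finally show ?thesis
    by simp
qed

end
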